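(* Let $d,k$ be positive integers and $r$ a positive real number. Let $L_d(r)=\{v\in\mathbb{Z}^d:\|v\|_2\le r,\ v_i>0 \text{ for } 1\le i\le d\}$ and $L_{d,k}(r)=\{v\in\mathbb{Z}^d:\|v\|_2\le r,\ v_i>0 \text{ and } k\nmid v_i \text{ for }1\le i\le d\}$. Then $k^d|L_{d,k}(r)|\ge (k-1)^d|L_d(r)|$.
   Context: $\|\cdot\|_2$ is the Euclidean norm. *)

theory Defs
  imports Complex_Main
begin

(* Vectors in Z^d are represented as integer lists of length d;
   coordinate i (1 <= i <= d) is v ! (i-1). *)

definition eucl_norm :: "int list \<Rightarrow> real" where
  "eucl_norm v = sqrt (\<Sum>i<length v. (real_of_int (v ! i))\<^sup>2)"

definition L :: "nat \<Rightarrow> real \<Rightarrow> int list set" where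
  "L d r = {v. length v = d \<and> eucl_norm v \<le> r \<and> (\<forall>i<d. v ! i > 0)}"

definition Lk :: "nat \<Rightarrow> nat \<Rightarrow> real \<Rightarrow> int list set" where
  "Lk d k r = {v. length v = d \<and> eucl_norm v \<le> r \<and>
                  (\<forall>i<d. v ! i > 0 \<and> \<not> (int k dvd v ! i))}"

end

theory Submission
  imports Defs
begin

text \<open>Coordinatewise, a positive integer x with a label a < k - 1 is sent to a positive
  non-multiple of k not exceeding x, with a label below k: a non-multiple keeps itself and its
  label, while a multiple x of k becomes x - k + a + 1, one of the k - 1 non-multiples just below
  it, with the new label k - 1. This map is injective and does not increase the Euclidean norm,
  so it embeds \<open>L d r \<times> {..<k - 1}\<^sup>d\<close> into \<open>Lk d k r \<times> {..<k}\<^sup>d\<close>.\<close>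

lemma card_mult_power_le_by_coordinatewise_injection:
  fixes g :: "'a \<times> 'b \<Rightarrow> 'c \<times> 'e"
  assumes inj: "inj_on g (X \<times> B)" and labels: "\<And>x b. x \<in> X \<Longrightarrow> b \<in> B \<Longrightarrow> snd (g (x, b)) \<in> E"
    and "finite B" "finite E" "finite T"
    and S: "S \<subseteq> {v. set v \<subseteq> X \<and> length v = d}"
    and into_T: "\<And>v bs. v \<in> S \<Longrightarrow> set bs \<subseteq> B \<Longrightarrow> length bs = d \<Longrightarrow>
                   map (fst \<circ> g) (zip v bs) \<in> T"
  shows "card S * card B ^ d \<le> card T * card E ^ d"
proof -
  have S_lists: "set v \<subseteq> X" "length v = d" if "v \<in> S" for v
    using S that by auto
  have zip_in: "set (zip v bs) \<subseteq> X \<times> B" if "v \<in> S" "set bs \<subseteq> B" for v bs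
    using S_lists(1)[OF that(1)] that(2) by (auto dest: set_zip_leftD set_zip_rightD)
  define Bs where "Bs = {bs. set bs \<subseteq> B \<and> length bs = d}"
  define Es where "Es = {es. set es \<subseteq> E \<and> length es = d}"
  define \<Phi> where "\<Phi> = (\<lambda>(v, bs). (map (fst \<circ> g) (zip v bs), map (snd \<circ> g) (zip v bs)))"
  have zip_\<Phi>: "map g (zip v bs) = zip (fst (\<Phi> (v, bs))) (snd (\<Phi> (v, bs)))" for v bs
    by (simp add: \<Phi>_def zip_map_fst_snd flip: map_map)
  have "(v, bs) = (w, cs)"
    if "v \<in> S" "bs \<in> Bs" "w \<in> S" "cs \<in> Bs" and eq: "\<Phi> (v, bs) = \<Phi> (w, cs)" for v bs w cs
  proof -
    have len: "length v = d" "length bs = d" "length w = d" "length cs = d"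
      and zips: "set (zip v bs) \<union> set (zip w cs) \<subseteq> X \<times> B"
      using that S_lists zip_in by (auto simp: Bs_def)
    have "inj_on g (set (zip v bs) \<union> set (zip w cs))"
      using inj zips by (rule inj_on_subset)
    moreover have "map g (zip v bs) = map g (zip w cs)"
      by (simp only: zip_\<Phi> eq)
    ultimately have "zip v bs = zip w cs"
      by (simp add: inj_on_map_eq_map)
    then show ?thesis
      using len by (simp add: zip_eq_conv)
  qed
  then have "inj_on \<Phi> (S \<times> Bs)"
    by (auto intro: inj_onI)
  moreover have "\<Phi> (v, bs) \<in> T \<times> Es" if "v \<in> S" "bs \<in> Bs" for v bs
  proof -
    have "set (zip v bs) \<subseteq> X \<times> B"
      using that zip_in by (simp add: Bs_def)
    then show ?thesis
      using that into_T labels S_lists by (fastforce simp: \<Phi>_def Bs_def Es_def)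
  qed
  then have "\<Phi> ` (S \<times> Bs) \<subseteq> T \<times> Es"
    by blast
  moreover have "finite (T \<times> Es)"
    using \<open>finite E\<close> \<open>finite T\<close> by (simp add: Es_def finite_lists_length_eq)
  ultimately have "card (S \<times> Bs) \<le> card (T \<times> Es)"
    by (rule card_inj_on_le)
  then show ?thesis
    using \<open>finite B\<close> \<open>finite E\<close>
    by (simp add: card_cartesian_product Bs_def Es_def card_lists_length_eq)
qed

definition spread_multiple :: "nat \<Rightarrow> int \<times> nat \<Rightarrow> int \<times> nat" where
  "spread_multiple k = (\<lambda>(x, a). if int k dvd x then (x - int k + int a + 1, k - 1) else (x, a))"

lemma spread_multiple_fst_le:
  assumes "a < k"
  shows "fst (spread_multiple k (x, a)) \<le> x"
  using assms by (simp add: spread_multiple_def)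

lemma spread_multiple_fst_pos:
  assumes "x > 0"
  shows "fst (spread_multiple k (x, a)) > 0"
proof (cases "int k dvd x")
  case True
  then have "int k \<le> x"
    using assms by (rule zdvd_imp_le)
  then show ?thesis
    using True by (simp add: spread_multiple_def)
qed (use assms in \<open>simp add: spread_multiple_def\<close>)

lemma spread_multiple_fst_not_dvd:
  assumes "a < k - 1"
  shows "\<not> int k dvd fst (spread_multiple k (x, a))"
proof (cases "int k dvd x")
  case True
  have "\<not> int k dvd int a + 1"
  proof
    assume "int k dvd int a + 1"
    then have "int k \<le> int a + 1"
      by (rule zdvd_imp_le) simp
    then show False
      using assms by linarith
  qed
  moreover have "fst (spread_multiple k (x, a)) = (x - int k) + (int a + 1)"
    using True by (simp add: spread_multiple_def)
  moreover have "int k dvd x - int k"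
    using True by simp
  ultimately show ?thesis
    by (simp add: dvd_add_right_iff)
qed (simp add: spread_multiple_def)

lemma spread_multiple_snd: "snd (spread_multiple k (x, a)) = (if int k dvd x then k - 1 else a)"
  by (simp add: spread_multiple_def)

lemma spread_multiple_snd_less:
  assumes "a < k - 1"
  shows "snd (spread_multiple k (x, a)) < k"
  using assms by (auto simp: spread_multiple_snd)

lemma inj_on_spread_multiple: "inj_on (spread_multiple k) (UNIV \<times> {..<k - 1})"
proof -
  have "x = y \<and> a = b"
    if "a < k - 1" "b < k - 1" and eq: "spread_multiple k (x, a) = spread_multiple k (y, b)"
    for x y a b
  proof -
    have "(if int k dvd x then k - 1 else a) = (if int k dvd y then k - 1 else b)"
      using arg_cong[OF eq, of snd] by (simp only: spread_multiple_snd)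
    then have same_dvd: "int k dvd x \<longleftrightarrow> int k dvd y"
      using that(1,2) by (auto split: if_splits)
    show ?thesis
    proof (cases "int k dvd x")
      case True
      then have "int a - int b = y - x" "int k dvd y"
        using eq same_dvd by (simp_all add: spread_multiple_def)
      then have "int a mod int k = int b mod int k"
        using True by (simp add: mod_eq_dvd_iff)
      then have "a = b"
        using that(1,2) by simp
      then show ?thesis
        using True same_dvd eq by (simp add: spread_multiple_def)
    next
      case False
      then show ?thesis
        using same_dvd eq by (simp add: spread_multiple_def)
    qed
  qed
  then show ?thesis
    by (auto intro: inj_onI)
qed

lemma abs_nth_le_eucl_norm:
  assumes "i < length v"
  shows "\<bar>real_of_int (v ! i)\<bar> \<le> eucl_norm v"
proof -
  have "(real_of_int (v ! i))\<^sup>2 \<le> (\<Sum>j<length v. (real_of_int (v ! j))\<^sup>2)"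
    using assms by (intro member_le_sum) auto
  then have "sqrt ((real_of_int (v ! i))\<^sup>2) \<le> eucl_norm v"
    unfolding eucl_norm_def by (rule real_sqrt_le_mono)
  then show ?thesis
    by simp
qed

lemma eucl_norm_mono:
  assumes "length w = length v" and "\<And>i. i < length v \<Longrightarrow> \<bar>w ! i\<bar> \<le> \<bar>v ! i\<bar>"
  shows "eucl_norm w \<le> eucl_norm v"
  unfolding eucl_norm_def assms(1)
proof (intro real_sqrt_le_mono sum_mono)
  fix i assume "i \<in> {..<length v}"
  then have "\<bar>real_of_int (w ! i)\<bar> \<le> \<bar>real_of_int (v ! i)\<bar>"
    using assms(2) by (simp flip: of_int_abs)
  then show "(real_of_int (w ! i))\<^sup>2 \<le> (real_of_int (v ! i))\<^sup>2"
    by (simp add: abs_le_square_iff)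
qed

lemma finite_L: "finite (L d r)"
proof (rule finite_subset)
  show "L d r \<subseteq> {v. set v \<subseteq> {1..\<lceil>r\<rceil>} \<and> length v = d}"
  proof (clarsimp simp: L_def in_set_conv_nth)
    fix v i assume "eucl_norm v \<le> r" "\<forall>i<length v. 0 < v ! i" "i < length v"
    then have "0 < v ! i" "real_of_int (v ! i) \<le> r"
      using abs_nth_le_eucl_norm[of i v] by auto
    then show "1 \<le> v ! i \<and> v ! i \<le> \<lceil>r\<rceil>"
      by (simp add: le_ceiling_iff)
  qed
  show "finite {v. set v \<subseteq> {1..\<lceil>r\<rceil>} \<and> length v = d}"
    by (rule finite_lists_length_eq) simp
qed

lemma finite_Lk: "finite (Lk d k r)"
  by (rule finite_subset[OF _ finite_L[of d r]]) (auto simp: L_def Lk_def)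

lemma spread_multiple_L_in_Lk:
  assumes "v \<in> L d r" and "set as \<subseteq> {..<k - 1}" and "length as = d"
  shows "map (fst \<circ> spread_multiple k) (zip v as) \<in> Lk d k r"
proof -
  let ?w = "map (fst \<circ> spread_multiple k) (zip v as)"
  have len: "length v = d" "length ?w = d"
    using assms by (simp_all add: L_def)
  have w_nth: "?w ! i = fst (spread_multiple k (v ! i, as ! i))"
    and pos: "v ! i > 0" if "i < d" for i
    using that assms len by (auto simp: L_def)
  have label: "as ! i < k - 1" if "i < d" for i
    using that assms(2,3) by (metis lessThan_iff nth_mem subsetD)
  have w_coord: "0 < ?w ! i \<and> ?w ! i \<le> v ! i \<and> \<not> int k dvd ?w ! i" if "i < d" for i
  proof -
    have "as ! i < k"
      using label[OF that] by arith
    then show ?thesis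
      using that w_nth pos label
      by (simp add: spread_multiple_fst_pos spread_multiple_fst_le spread_multiple_fst_not_dvd)
  qed
  have "eucl_norm ?w \<le> eucl_norm v"
  proof (rule eucl_norm_mono)
    fix i assume "i < length v"
    then have "0 < ?w ! i" "?w ! i \<le> v ! i"
      using w_coord len by auto
    then show "\<bar>?w ! i\<bar> \<le> \<bar>v ! i\<bar>"
      by simp
  qed (use len in simp)
  also have "\<dots> \<le> r"
    using assms(1) by (simp add: L_def)
  finally show ?thesis
    using w_coord len by (simp add: Lk_def)
qed

theorem lemma2p5:
  fixes d k :: nat and r :: real
  assumes "d > 0" and "k > 0" and "r > 0"
  shows "(k ^ d) * card (Lk d k r) \<ge> (k - 1) ^ d * card (L d r)"
proof -
  have "inj_on (spread_multiple k) ({0<..} \<times> {..<k - 1})"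
    by (rule inj_on_subset[OF inj_on_spread_multiple]) auto
  moreover have "L d r \<subseteq> {v. set v \<subseteq> {0<..} \<and> length v = d}"
    by (auto simp: L_def in_set_conv_nth)
  ultimately have "card (L d r) * card {..<k - 1} ^ d \<le> card (Lk d k r) * card {..<k} ^ d"
    using finite_Lk spread_multiple_snd_less spread_multiple_L_in_Lk
    by (intro card_mult_power_le_by_coordinatewise_injection) auto
  then show ?thesis
    by (simp add: mult.commute)
qed

end
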